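(* Let $a,b,k,l$ be pairwise distinct complex parameters and $J,J'$ commuting constant $N\times N$ matrices. Let $H_{xy}$ ($x\neq y$) be $N\times N$ matrix functions of variables $\xi^J_k,\xi^{J'}_l$ satisfying $$\partial^J_kH_{xy}=\frac{J}{k-x}H_{xy}-H_{xy}\frac{J}{k-y}+H_{xk}JH_{ky},\qquad \partial^{J'}_lH_{xy}=\frac{J'}{l-x}H_{xy}-H_{xy}\frac{J'}{l-y}+H_{xl}J'H_{ly}$$ for all relevant pairwise distinct labels. Then the system is multidimensionally consistent: computing $\partial^{J'}_l\partial^J_kH_{ab}$ and $\partial^J_k\partial^{J'}_lH_{ab}$ by differentiating the right-hand sides and substituting the system for all first derivatives yields identical expressions.
   Context: $\partial^J_k$ denotes $\partial/\partial\xi^J_k$, where $\xi^J_k$ is a Miwa-type variable labelled by the complex parameter $k$ and the constant matrix $J$. *)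

theory Defs
  imports "Jordan_Normal_Form.Matrix"
begin

definition flow_rhs ::
  "complex mat \<Rightarrow> complex \<Rightarrow> (complex \<Rightarrow> complex \<Rightarrow> complex mat) \<Rightarrow> complex \<Rightarrow> complex \<Rightarrow> complex mat" where
  "flow_rhs J k H x y =
     (1 / (k - x)) \<cdot>\<^sub>m (J * H x y) - (1 / (k - y)) \<cdot>\<^sub>m (H x y * J) + H x k * J * H k y"

text \<open>Result of differentiating flow_rhs J k H x y (J constant, k x y constant parameters)
  when the first derivatives of the H's are G (product rule).
  Substituting G := flow_rhs J' l H gives the formal second derivative of H_xy.\<close>
definition flow_rhs_deriv ::
  "complex mat \<Rightarrow> complex \<Rightarrow> (complex \<Rightarrow> complex \<Rightarrow> complex mat)
     \<Rightarrow> (complex \<Rightarrow> complex \<Rightarrow> complex mat) \<Rightarrow> complex \<Rightarrow> complex \<Rightarrow> complex mat" where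
  "flow_rhs_deriv J k H G x y =
     (1 / (k - x)) \<cdot>\<^sub>m (J * G x y) - (1 / (k - y)) \<cdot>\<^sub>m (G x y * J)
     + G x k * J * H k y + H x k * J * G k y"

end

theory Submission
  imports Defs
begin

text \<open>Expanding \<open>\<partial>\<^sup>J'\<^sub>l\<partial>\<^sup>J\<^sub>k H\<^sub>a\<^sub>b\<close> by the product rule, the only terms carrying the factor
  \<open>1/(l-k)\<close> are \<open>\<plusminus>H\<^sub>a\<^sub>k J J' H\<^sub>k\<^sub>b/(l-k)\<close>; they cancel because \<open>J\<close> and \<open>J'\<close> commute.
  The remaining terms split into a part that is symmetric under \<open>(J,k) \<leftrightarrow> (J',l)\<close> and
  a cross part together with its image under that swap, so both orders of
  differentiation give the same expression.\<close>

definition mixed_flow_diag ::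
  "complex mat \<Rightarrow> complex \<Rightarrow> complex mat \<Rightarrow> complex \<Rightarrow> (complex \<Rightarrow> complex \<Rightarrow> complex mat)
     \<Rightarrow> complex \<Rightarrow> complex \<Rightarrow> complex mat" where
  "mixed_flow_diag J k J' l H x y =
     (1 / ((k - x) * (l - x))) \<cdot>\<^sub>m (J * J' * H x y) + (1 / ((k - y) * (l - y))) \<cdot>\<^sub>m (H x y * J' * J)"

definition mixed_flow_cross ::
  "complex mat \<Rightarrow> complex \<Rightarrow> complex mat \<Rightarrow> complex \<Rightarrow> (complex \<Rightarrow> complex \<Rightarrow> complex mat)
     \<Rightarrow> complex \<Rightarrow> complex \<Rightarrow> complex mat" where
  "mixed_flow_cross J k J' l H x y =
     H x l * J' * H l k * J * H k y
     + (1 / (k - x)) \<cdot>\<^sub>m (J * H x l * J' * H l y)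
     - (1 / (k - y)) \<cdot>\<^sub>m (H x l * J' * H l y * J)
     - (1 / ((k - x) * (l - y))) \<cdot>\<^sub>m (J * H x y * J')"

text \<open>Fixing the dimension lets the simplifier discharge the carrier premises of the
  matrix laws; \<open>normalize\<close> then puts sums into AC normal form, right-nests products and
  pulls scalars outside.\<close>

locale square_matrices = fixes n :: nat
begin

lemma mult_closed [simp]:
  "A \<in> carrier_mat n n \<Longrightarrow> B \<in> carrier_mat n n \<Longrightarrow> A * B \<in> carrier_mat n n"
  by (rule mult_carrier_mat)

lemma minus_closed [simp]:
  "A \<in> carrier_mat n n \<Longrightarrow> B \<in> carrier_mat n n \<Longrightarrow> A - B \<in> carrier_mat n n"
  by (rule minus_carrier_mat)

lemma minus_eq_add_smult:
  "(A :: 'a :: ring_1 mat) \<in> carrier_mat n n \<Longrightarrow> B \<in> carrier_mat n n \<Longrightarrow> A - B = A + (-1) \<cdot>\<^sub>m B"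
  by (intro eq_matI) auto

lemma smult_smult:
  "(A :: 'a :: semigroup_mult mat) \<in> carrier_mat n n \<Longrightarrow> c \<cdot>\<^sub>m (d \<cdot>\<^sub>m A) = (c * d) \<cdot>\<^sub>m A"
  by (intro eq_matI) (auto simp: mult.assoc)

lemma add_left_commute:
  fixes A :: "'a :: comm_monoid_add mat"
  assumes "A \<in> carrier_mat n n" "B \<in> carrier_mat n n" "X \<in> carrier_mat n n"
  shows "A + (B + X) = B + (A + X)"
proof -
  have "A + (B + X) = (A + B) + X"
    using assms by simp
  also have "\<dots> = (B + A) + X"
    using comm_add_mat[OF assms(1,2)] by (simp only:)
  finally show ?thesis
    using assms by simp
qed

lemmas normalize =
  minus_eq_add_smult smult_smult add_left_commute
  mult_add_distrib_mat[of _ n n _ n] add_mult_distrib_mat[of _ n n _ _ n]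
  assoc_mult_mat[of _ n n _ n _ n]
  mult_smult_assoc_mat[of _ n n _ n] mult_smult_distrib[of _ n n _ n]
  add_smult_distrib_left_mat[of _ n n] comm_add_mat[of _ n n]

end

lemma flow_rhs_deriv_flow_rhs_expand:
  assumes J: "J \<in> carrier_mat n n" and J': "J' \<in> carrier_mat n n"
    and comm: "J * J' = J' * J"
    and H: "H x y \<in> carrier_mat n n" "H x k \<in> carrier_mat n n" "H x l \<in> carrier_mat n n"
      "H k y \<in> carrier_mat n n" "H l y \<in> carrier_mat n n"
      "H k l \<in> carrier_mat n n" "H l k \<in> carrier_mat n n"
  shows "flow_rhs_deriv J k H (flow_rhs J' l H) x y =
    mixed_flow_diag J k J' l H x y + (mixed_flow_cross J k J' l H x y + mixed_flow_cross J' l J k H x y)"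
proof -
  interpret square_matrices n .
  have comm_left: "J' * (J * X) = J * (J' * X)" if "X \<in> carrier_mat n n" for X
    using that J J' comm by (simp flip: assoc_mult_mat)
  define Z where "Z = H x k * (J * (J' * H k y))"
  have Z: "Z \<in> carrier_mat n n"
    unfolding Z_def using H J J' by simp
  have cancel: "(1 / (l - k)) \<cdot>\<^sub>m Z + (- (1 / (l - k))) \<cdot>\<^sub>m Z = 0\<^sub>m n n"
    using Z by (intro eq_matI) auto
  define R where "R =
    mixed_flow_diag J k J' l H x y + (mixed_flow_cross J k J' l H x y + mixed_flow_cross J' l J k H x y)"
  have R: "R \<in> carrier_mat n n"
    unfolding R_def mixed_flow_diag_def mixed_flow_cross_def using H J J' by simp
  have "flow_rhs_deriv J k H (flow_rhs J' l H) x y =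
      R + ((1 / (l - k)) \<cdot>\<^sub>m Z + (- (1 / (l - k))) \<cdot>\<^sub>m Z)"
    unfolding flow_rhs_deriv_def flow_rhs_def R_def mixed_flow_diag_def mixed_flow_cross_def Z_def
    using H J J' by (simp add: normalize comm_left comm mult.commute)
  also have "\<dots> = R"
    unfolding cancel using R by simp
  finally show ?thesis
    unfolding R_def .
qed

lemma mixed_flow_diag_swap:
  assumes J: "J \<in> carrier_mat n n" and J': "J' \<in> carrier_mat n n"
    and H: "H x y \<in> carrier_mat n n" and comm: "J * J' = J' * J"
  shows "mixed_flow_diag J k J' l H x y = mixed_flow_diag J' l J k H x y"
proof -
  have "H x y * J' * J = H x y * J * J'"
    unfolding assoc_mult_mat[OF H J' J] assoc_mult_mat[OF H J J'] comm ..
  then show ?thesis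
    unfolding mixed_flow_diag_def comm by (simp add: mult.commute)
qed

theorem mainTheorem11:
  fixes N :: nat and a b k l :: complex and J J' :: "complex mat"
    and H :: "complex \<Rightarrow> complex \<Rightarrow> complex mat"
  assumes distinct: "distinct [a, b, k, l]"
    and J: "J \<in> carrier_mat N N" and J': "J' \<in> carrier_mat N N"
    and comm: "J * J' = J' * J"
    and H: "\<And>x y. x \<in> {a, b, k, l} \<Longrightarrow> y \<in> {a, b, k, l} \<Longrightarrow> x \<noteq> y \<Longrightarrow> H x y \<in> carrier_mat N N"
  shows "flow_rhs_deriv J k H (flow_rhs J' l H) a b = flow_rhs_deriv J' l H (flow_rhs J k H) a b"
proof -
  interpret square_matrices N .
  have HC: "H a b \<in> carrier_mat N N" "H a k \<in> carrier_mat N N" "H a l \<in> carrier_mat N N"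
    "H k b \<in> carrier_mat N N" "H l b \<in> carrier_mat N N"
    "H k l \<in> carrier_mat N N" "H l k \<in> carrier_mat N N"
    using H distinct by auto
  have cross: "mixed_flow_cross J k J' l H a b \<in> carrier_mat N N"
    "mixed_flow_cross J' l J k H a b \<in> carrier_mat N N"
    unfolding mixed_flow_cross_def using HC J J' by simp_all
  show ?thesis
    using flow_rhs_deriv_flow_rhs_expand[OF J J' comm HC]
      flow_rhs_deriv_flow_rhs_expand[OF J' J comm[symmetric] HC(1,3,2,5,4,7,6)]
      mixed_flow_diag_swap[where H = H and x = a and y = b, OF J J' HC(1) comm] comm_add_mat[OF cross]
    by simp
qed

end
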